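(* Let $X$ be a metrizable space, $G$ a group and $\varphi\colon G\times X\to X$ an action which is metric-independent expansive (MIE). If $Y\subseteq X$ is a closed subset which is invariant ($g\cdot y\in Y$ for all $g\in G$, $y\in Y$), then the restricted action of $G$ on $Y$ (with the subspace topology) is MIE.
   Context: We write $g\cdot x=\varphi(g,x)$. If $d$ is a metric on $X$, the action is expansive with respect to $d$ if there is $c>0$ such that for all $x\neq y$ in $X$ there is $g\in G$ with $d(g\cdot x,g\cdot y)>c$. The action is metric-independent expansive (MIE) if it is expansive with respect to every metric compatible with the topology of $X$. *)

theory Defs
  imports "HOL-Analysis.Analysis" "HOL-Algebra.Group_Action"
begin

definition compatible_metric :: "'a topology \<Rightarrow> ('a \<Rightarrow> 'a \<Rightarrow> real) \<Rightarrow> bool" where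
  "compatible_metric X d \<longleftrightarrow>
     Metric_space (topspace X) d \<and> Metric_space.mtopology (topspace X) d = X"

definition expansive_wrt ::
  "('g, 'm) monoid_scheme \<Rightarrow> ('g \<Rightarrow> 'a \<Rightarrow> 'a) \<Rightarrow> 'a set \<Rightarrow> ('a \<Rightarrow> 'a \<Rightarrow> real) \<Rightarrow> bool" where
  "expansive_wrt G \<phi> S d \<longleftrightarrow>
     (\<exists>c>0. \<forall>x\<in>S. \<forall>y\<in>S. x \<noteq> y \<longrightarrow> (\<exists>g\<in>carrier G. d (\<phi> g x) (\<phi> g y) > c))"

definition MIE :: "('g, 'm) monoid_scheme \<Rightarrow> ('g \<Rightarrow> 'a \<Rightarrow> 'a) \<Rightarrow> 'a topology \<Rightarrow> bool" where
  "MIE G \<phi> X \<longleftrightarrow> (\<forall>d. compatible_metric X d \<longrightarrow> expansive_wrt G \<phi> (topspace X) d)"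

end

theory Submission
  imports Defs
begin

text \<open>
  Every compatible metric e on the closed set Y is, after capping at 1, the restriction of a
  compatible metric on X (Hausdorff's metric extension theorem). Expansivity of the action on X
  with respect to that metric restricts to expansivity on the invariant set Y with respect to e,
  which dominates it on Y.

  For a compatible metric d on X bounded by 1 the extension is
    ext_dist x y = sup {|hext c x - hext c y| : c \<in> Y} + min (d x y) (dist_to_Y x + dist_to_Y y),
  where hext c extends e(-, c) off Y by Hausdorff's formula
    hext c x = inf {e b c + d x b / dist_to_Y x : b \<in> Y} - 1.
\<close>

lemma (in group_action) restrict_to_invariant_subset:
  assumes "Y \<subseteq> E" and invariant: "\<forall>g\<in>carrier G. \<forall>y\<in>Y. \<phi> g y \<in> Y"
  shows "group_action G Y (\<lambda>g. restrict (\<phi> g) Y)"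
proof -
  interpret group G
    using group_hom group_hom.axioms(1) by blast
  have Bij: "restrict (\<phi> g) Y \<in> Bij Y" if g: "g \<in> carrier G" for g
  proof -
    have "Y \<subseteq> \<phi> g ` Y"
    proof
      fix y assume y: "y \<in> Y"
      have "\<phi> g (\<phi> (inv g) y) = y"
        using orbit_sym_aux [of "inv g" y "\<phi> (inv g) y"] g y assms(1) by auto
      then show "y \<in> \<phi> g ` Y"
        using invariant g y by (metis imageI inv_closed)
    qed
    moreover have "inj_on (\<phi> g) Y"
      using inj_prop [OF g] assms(1) inj_on_subset by blast
    ultimately show ?thesis
      using invariant g by (auto simp: Bij_def bij_betw_def)
  qed
  show ?thesis
    unfolding group_action_def group_hom_def group_hom_axioms_def
  proof (intro conjI homI)
    show "group G" "group (BijGroup Y)"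
      by (simp_all add: is_group group_BijGroup)
    show "restrict (\<phi> g) Y \<in> carrier (BijGroup Y)" if "g \<in> carrier G" for g
      using Bij that by (simp add: BijGroup_def)
    show "restrict (\<phi> (g \<otimes> h)) Y = restrict (\<phi> g) Y \<otimes>\<^bsub>BijGroup Y\<^esub> restrict (\<phi> h) Y"
      if "g \<in> carrier G" "h \<in> carrier G" for g h
      using that Bij composition_rule assms(1) invariant
      by (auto simp: BijGroup_def compose_def subset_iff)
  qed
qed

lemma mtopology_eq_iff:
  assumes "Metric_space M d1" "Metric_space M d2"
  shows "Metric_space.mtopology M d1 = Metric_space.mtopology M d2 \<longleftrightarrow>
    (\<forall>a\<in>M. \<forall>\<epsilon>>0. \<exists>\<delta>>0. \<forall>x\<in>M. d1 a x < \<delta> \<longrightarrow> d2 a x < \<epsilon>) \<and>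
    (\<forall>a\<in>M. \<forall>\<epsilon>>0. \<exists>\<delta>>0. \<forall>x\<in>M. d2 a x < \<delta> \<longrightarrow> d1 a x < \<epsilon>)"
  unfolding homeomorphic_maps_id [symmetric] homeomorphic_maps_def
  by (simp add: Metric_space.metric_continuous_map assms Ball_def imp_conjL) blast

locale Hausdorff_metric_extension = Metric_space M d + E: Metric_space Y e
  for M Y :: "'a set" and d e +
  assumes closed: "closedin mtopology Y"
    and compatible: "E.mtopology = subtopology mtopology Y"
    and nonempty: "Y \<noteq> {}"
    and d_le_1: "d x y \<le> 1"
    and e_le_1: "e x y \<le> 1"
begin

lemma Y_subset: "Y \<subseteq> M"
  using closed closedin_subset by fastforce

lemma mtopology_d_on_Y: "Metric_space.mtopology Y d = E.mtopology"
proof -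
  interpret Submetric M d Y
    using Y_subset by unfold_locales
  show ?thesis
    using mtopology_submetric compatible by simp
qed

lemma e_small_if_d_small:
  assumes "a \<in> Y" "\<epsilon> > 0"
  shows "\<exists>\<delta>>0. \<forall>b\<in>Y. d a b < \<delta> \<longrightarrow> e a b < \<epsilon>"
  using mtopology_eq_iff [OF subspace [OF Y_subset] E.Metric_space_axioms] mtopology_d_on_Y assms
  by blast

lemma d_small_if_e_small:
  assumes "a \<in> Y" "\<epsilon> > 0"
  shows "\<exists>\<delta>>0. \<forall>b\<in>Y. e a b < \<delta> \<longrightarrow> d a b < \<epsilon>"
  using mtopology_eq_iff [OF subspace [OF Y_subset] E.Metric_space_axioms] mtopology_d_on_Y assms
  by blast

definition dist_to_Y :: "'a \<Rightarrow> real" where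
  "dist_to_Y x = Inf ((\<lambda>b. d x b) ` Y)"

lemma dist_to_Y_le: "b \<in> Y \<Longrightarrow> dist_to_Y x \<le> d x b"
  unfolding dist_to_Y_def by (rule cInf_lower) (auto intro: bdd_belowI [of _ 0])

lemma dist_to_Y_greatest: "(\<And>b. b \<in> Y \<Longrightarrow> t \<le> d x b) \<Longrightarrow> t \<le> dist_to_Y x"
  unfolding dist_to_Y_def using nonempty by (auto intro: cInf_greatest)

lemma dist_to_Y_nonneg [simp]: "0 \<le> dist_to_Y x"
  by (rule dist_to_Y_greatest) simp

lemma dist_to_Y_approx: "\<epsilon> > 0 \<Longrightarrow> \<exists>b\<in>Y. d x b < dist_to_Y x + \<epsilon>"
  using cInf_lessD [of "(\<lambda>b. d x b) ` Y" "dist_to_Y x + \<epsilon>"] nonempty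
  by (auto simp: dist_to_Y_def)

lemma dist_to_Y_eq_0: "x \<in> Y \<Longrightarrow> dist_to_Y x = 0"
  using dist_to_Y_le [of x x] Y_subset by (simp add: subset_iff antisym)

lemma dist_to_Y_pos:
  assumes "x \<in> M" "x \<notin> Y"
  shows "0 < dist_to_Y x"
proof -
  have "openin mtopology (M - Y)"
    using closed by (simp add: closedin_def)
  then obtain r where "r > 0" "mball x r \<subseteq> M - Y"
    using assms by (auto simp: openin_mtopology)
  moreover have "r \<le> d x b" if "b \<in> Y" and "mball x r \<subseteq> M - Y" for b
  proof (rule ccontr)
    assume "\<not> r \<le> d x b"
    then have "b \<in> mball x r"
      using that assms Y_subset by auto
    then show False
      using that by blast
  qed
  ultimately have "r \<le> dist_to_Y x"
    by (blast intro: dist_to_Y_greatest)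
  with \<open>r > 0\<close> show ?thesis by simp
qed

lemma dist_to_Y_lipschitz:
  assumes "x \<in> M" "y \<in> M"
  shows "dist_to_Y x \<le> dist_to_Y y + d x y"
proof -
  have "dist_to_Y x - d x y \<le> dist_to_Y y"
  proof (rule dist_to_Y_greatest)
    fix b assume "b \<in> Y"
    then have "dist_to_Y x \<le> d x y + d y b"
      using dist_to_Y_le [of b x] triangle [of x y b] assms Y_subset by force
    then show "dist_to_Y x - d x y \<le> d y b" by simp
  qed
  then show ?thesis by simp
qed

lemma dist_to_Y_le_1: "dist_to_Y x \<le> 1"
  using nonempty dist_to_Y_le d_le_1 order_trans by blast

lemma one_le_ratio:
  assumes "x \<in> M" "x \<notin> Y" "b \<in> Y"
  shows "1 \<le> d x b / dist_to_Y x"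
  using dist_to_Y_pos [OF assms(1,2)] dist_to_Y_le [OF assms(3)] by simp

definition hext :: "'a \<Rightarrow> 'a \<Rightarrow> real" where
  "hext c x =
    (if x \<in> Y then e x c else Inf ((\<lambda>b. e b c + d x b / dist_to_Y x) ` Y) - 1)"

lemma hext_on_Y: "x \<in> Y \<Longrightarrow> hext c x = e x c"
  by (simp add: hext_def)

lemma hext_le:
  assumes "x \<in> M" "x \<notin> Y" "b \<in> Y"
  shows "hext c x \<le> e b c + d x b / dist_to_Y x - 1"
proof -
  have "bdd_below ((\<lambda>b. e b c + d x b / dist_to_Y x) ` Y)"
    by (rule bdd_belowI [of _ 0]) (auto intro: add_nonneg_nonneg)
  then have "Inf ((\<lambda>b. e b c + d x b / dist_to_Y x) ` Y) \<le> e b c + d x b / dist_to_Y x"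
    using assms(3) by (rule cINF_lower)
  then show ?thesis
    using assms by (simp add: hext_def)
qed

lemma hext_greatest:
  assumes "x \<in> M" "x \<notin> Y" "\<And>b. b \<in> Y \<Longrightarrow> t \<le> e b c + d x b / dist_to_Y x - 1"
  shows "t \<le> hext c x"
proof -
  have "t + 1 \<le> Inf ((\<lambda>b. e b c + d x b / dist_to_Y x) ` Y)"
    using nonempty assms(3) by (force intro: cInf_greatest)
  then show ?thesis
    using assms by (simp add: hext_def)
qed

lemma hext_nonneg:
  assumes "x \<in> M"
  shows "0 \<le> hext c x"
proof (cases "x \<in> Y")
  case False
  show ?thesis
  proof (rule hext_greatest [OF assms False])
    fix b assume "b \<in> Y"
    then show "0 \<le> e b c + d x b / dist_to_Y x - 1"
      using one_le_ratio [OF assms False] E.nonneg [of b c] by (meson add_increasing diff_ge_0_iff_ge)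
  qed
qed (simp add: hext_on_Y)

lemma hext_le_2:
  assumes "x \<in> M"
  shows "hext c x \<le> 2"
proof (cases "x \<in> Y")
  case False
  then have pos: "0 < dist_to_Y x"
    using dist_to_Y_pos assms by blast
  then obtain b where b: "b \<in> Y" "d x b < dist_to_Y x + dist_to_Y x"
    using dist_to_Y_approx by blast
  then have "d x b / dist_to_Y x < 2"
    using pos by (simp add: divide_less_eq)
  then show ?thesis
    using hext_le [OF assms False b(1), of c] e_le_1 [of b c] by linarith
qed (use e_le_1 [of x c] in \<open>simp add: hext_on_Y\<close>)

lemma ratio_diff_le:
  assumes "a \<in> M" "a \<notin> Y" "x \<in> M" "x \<notin> Y" "b \<in> Y"
  shows "\<bar>d x b / dist_to_Y x - d a b / dist_to_Y a\<bar> \<le> 2 * d a x / (dist_to_Y a * dist_to_Y x)"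
proof -
  let ?Da = "dist_to_Y a" and ?Dx = "dist_to_Y x"
  have pos: "0 < ?Da" "0 < ?Dx"
    using dist_to_Y_pos assms by auto
  have bM: "b \<in> M"
    using assms(5) Y_subset by auto
  have "\<bar>d x b - d a b\<bar> * ?Da \<le> d a x * 1"
    using triangle [OF assms(1,3) bM] triangle [OF assms(3,1) bM] commute [of a x] dist_to_Y_le_1
    by (intro mult_mono) auto
  then have A: "\<bar>(d x b - d a b) * ?Da\<bar> \<le> d a x"
    using pos by (simp add: abs_mult)
  have "d a b * \<bar>?Da - ?Dx\<bar> \<le> 1 * d a x"
    using dist_to_Y_lipschitz [OF assms(1,3)] dist_to_Y_lipschitz [OF assms(3,1)] commute [of a x] d_le_1
    by (intro mult_mono) auto
  then have B: "\<bar>d a b * (?Da - ?Dx)\<bar> \<le> d a x"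
    by (simp add: abs_mult)
  have "d x b * ?Da - d a b * ?Dx = (d x b - d a b) * ?Da + d a b * (?Da - ?Dx)"
    by (simp add: algebra_simps)
  then have "\<bar>d x b * ?Da - d a b * ?Dx\<bar> \<le> 2 * d a x"
    using abs_triangle_ineq [of "(d x b - d a b) * ?Da" "d a b * (?Da - ?Dx)"] A B by linarith
  moreover have "d x b / ?Dx - d a b / ?Da = (d x b * ?Da - d a b * ?Dx) / (?Da * ?Dx)"
    using pos by (simp add: field_simps)
  moreover have "0 < ?Da * ?Dx"
    using pos by simp
  ultimately show ?thesis
    by (simp add: abs_divide divide_right_mono)
qed

lemma hext_lipschitz_off_Y:
  assumes "a \<in> M" "a \<notin> Y" "x \<in> M" "x \<notin> Y"
  shows "\<bar>hext c a - hext c x\<bar> \<le> 2 * d a x / (dist_to_Y a * dist_to_Y x)"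
proof -
  let ?K = "2 * d a x / (dist_to_Y a * dist_to_Y x)"
  have "hext c a - ?K \<le> hext c x"
  proof (rule hext_greatest [OF assms(3,4)])
    fix b assume b: "b \<in> Y"
    show "hext c a - ?K \<le> e b c + d x b / dist_to_Y x - 1"
      using hext_le [OF assms(1,2) b, of c] abs_le_D2 [OF ratio_diff_le [OF assms b]] by linarith
  qed
  moreover have "hext c x - ?K \<le> hext c a"
  proof (rule hext_greatest [OF assms(1,2)])
    fix b assume b: "b \<in> Y"
    show "hext c x - ?K \<le> e b c + d a b / dist_to_Y a - 1"
      using hext_le [OF assms(3,4) b, of c] abs_le_D1 [OF ratio_diff_le [OF assms b]] by linarith
  qed
  ultimately show ?thesis by linarith
qed

lemma hext_le_near_Y:
  assumes "a \<in> Y" "c \<in> Y" "x \<in> M" "x \<notin> Y" "0 < \<eta>" "\<eta> \<le> 1"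
    and e_small: "\<forall>b\<in>Y. d a b < 3 * r \<longrightarrow> e a b < \<eta>" and "d a x < r"
  shows "hext c x < e a c + 2 * \<eta>"
proof -
  let ?Dx = "dist_to_Y x"
  have pos: "0 < ?Dx"
    using dist_to_Y_pos assms(3,4) by blast
  have Dx_le: "?Dx \<le> d a x"
    using dist_to_Y_le [OF assms(1), of x] commute [of a x] by simp
  obtain b where b: "b \<in> Y" "d x b < ?Dx + \<eta> * ?Dx"
    using dist_to_Y_approx [of "\<eta> * ?Dx" x] pos assms(5) by auto
  have "d a b \<le> d a x + d x b"
    using triangle assms(1,3) b(1) Y_subset by blast
  also have "\<dots> < 3 * r"
    using b(2) Dx_le assms(5,6,8) pos mult_left_le_one_le [of ?Dx \<eta>] by linarith
  finally have "e a b < \<eta>"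
    using e_small b(1) by blast
  moreover have "d x b / ?Dx < 1 + \<eta>"
    using b(2) pos by (simp add: divide_less_eq algebra_simps)
  moreover have "e b c \<le> e a c + e a b"
    using E.triangle [of b a c] E.commute [of a b] assms(1,2) b(1) by simp
  ultimately show ?thesis
    using hext_le [OF assms(3,4) b(1), of c] by linarith
qed

lemma hext_ge_near_Y:
  assumes "a \<in> Y" "c \<in> Y" "x \<in> M" "x \<notin> Y" "0 < \<eta>"
    and e_small: "\<forall>b\<in>Y. d a b < 3 * r \<longrightarrow> e a b < \<eta>" and "d a x < r"
  shows "e a c - \<eta> \<le> hext c x"
proof (rule hext_greatest [OF assms(3,4)])
  fix b assume b: "b \<in> Y"
  let ?Dx = "dist_to_Y x"
  have ratio: "1 \<le> d x b / ?Dx"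
    using one_le_ratio [OF assms(3,4) b] .
  show "e a c - \<eta> \<le> e b c + d x b / ?Dx - 1"
  proof (cases "e a b < \<eta>")
    case True
    then show ?thesis
      using E.triangle [of a b c] assms(1,2) b ratio by simp
  next
    case False
    have pos: "0 < ?Dx"
      using dist_to_Y_pos assms(3,4) by blast
    have "?Dx \<le> d a x"
      using dist_to_Y_le [OF assms(1), of x] commute [of a x] by simp
    moreover have "3 * r \<le> d a b"
      using False e_small b by (meson not_less)
    moreover have "d a b \<le> d a x + d x b"
      using triangle assms(1,3) b Y_subset by blast
    ultimately have "2 * ?Dx \<le> d x b"
      using assms(7) by linarith
    then have "2 \<le> d x b / ?Dx"
      using pos by (simp add: le_divide_eq)
    then show ?thesis
      using e_le_1 [of a c] E.nonneg [of b c] assms(5) by linarith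
  qed
qed

lemma hext_equicontinuous_at_Y:
  assumes "a \<in> Y" "\<epsilon> > 0"
  shows "\<exists>\<delta>>0. \<forall>x\<in>M. d a x < \<delta> \<longrightarrow> (\<forall>c\<in>Y. \<bar>hext c a - hext c x\<bar> \<le> \<epsilon>)"
proof -
  define \<eta> where "\<eta> = min (\<epsilon> / 2) 1"
  have \<eta>: "0 < \<eta>" "\<eta> \<le> 1" "2 * \<eta> \<le> \<epsilon>"
    using assms(2) by (auto simp: \<eta>_def)
  obtain s where s: "s > 0" "\<forall>b\<in>Y. d a b < s \<longrightarrow> e a b < \<eta>"
    using e_small_if_d_small [OF assms(1) \<eta>(1)] by blast
  define r where "r = s / 3"
  have e_small: "\<forall>b\<in>Y. d a b < 3 * r \<longrightarrow> e a b < \<eta>"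
    using s by (simp add: r_def)
  show ?thesis
  proof (intro exI [of _ r] conjI ballI impI)
    show "0 < r"
      using s by (simp add: r_def)
    fix x c assume x: "x \<in> M" "d a x < r" and c: "c \<in> Y"
    show "\<bar>hext c a - hext c x\<bar> \<le> \<epsilon>"
    proof (cases "x \<in> Y")
      case True
      have "e a x < \<eta>"
        using e_small True x(2) \<open>0 < r\<close> by auto
      moreover have "\<bar>e a c - e x c\<bar> \<le> e a x"
        using E.triangle [of a x c] E.triangle [of x a c] E.commute [of a x] assms(1) True c
        by simp
      ultimately show ?thesis
        using \<eta> by (simp add: hext_on_Y assms(1) True)
    next
      case False
      show ?thesis
        using hext_le_near_Y [OF assms(1) c x(1) False \<eta>(1,2) e_small x(2)]
          hext_ge_near_Y [OF assms(1) c x(1) False \<eta>(1) e_small x(2)] \<eta>(3)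
        by (simp add: hext_on_Y assms(1))
    qed
  qed
qed

lemma hext_equicontinuous_off_Y:
  assumes "a \<in> M" "a \<notin> Y" "\<epsilon> > 0"
  shows "\<exists>\<delta>>0. \<forall>x\<in>M. d a x < \<delta> \<longrightarrow> (\<forall>c\<in>Y. \<bar>hext c a - hext c x\<bar> \<le> \<epsilon>)"
proof -
  let ?Da = "dist_to_Y a"
  have pos: "0 < ?Da"
    using dist_to_Y_pos assms(1,2) by blast
  define \<delta> where "\<delta> = min (?Da / 2) (\<epsilon> * (?Da * ?Da) / 4)"
  show ?thesis
  proof (intro exI [of _ \<delta>] conjI ballI impI)
    show "0 < \<delta>"
      using pos assms(3) by (simp add: \<delta>_def)
    fix x c assume x: "x \<in> M" "d a x < \<delta>"
    have Dx: "?Da / 2 < dist_to_Y x"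
      using dist_to_Y_lipschitz [OF assms(1) x(1)] x(2) by (simp add: \<delta>_def)
    then have "x \<notin> Y"
      using pos dist_to_Y_eq_0 by force
    then have "\<bar>hext c a - hext c x\<bar> \<le> 2 * d a x / (?Da * dist_to_Y x)"
      using hext_lipschitz_off_Y assms(1,2) x(1) by blast
    also have "\<dots> \<le> 2 * d a x / (?Da * (?Da / 2))"
      using Dx pos by (intro divide_left_mono mult_left_mono) auto
    also have "\<dots> = 4 * d a x / (?Da * ?Da)"
      by simp
    also have "\<dots> \<le> \<epsilon>"
      using x(2) pos by (simp add: \<delta>_def pos_divide_le_eq)
    finally show "\<bar>hext c a - hext c x\<bar> \<le> \<epsilon>" .
  qed
qed

lemma hext_equicontinuous:
  assumes "a \<in> M" "\<epsilon> > 0"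
  shows "\<exists>\<delta>>0. \<forall>x\<in>M. d a x < \<delta> \<longrightarrow> (\<forall>c\<in>Y. \<bar>hext c a - hext c x\<bar> \<le> \<epsilon>)"
  using hext_equicontinuous_at_Y hext_equicontinuous_off_Y assms by blast

definition hext_dist :: "'a \<Rightarrow> 'a \<Rightarrow> real" where
  "hext_dist x y = (SUP c\<in>Y. \<bar>hext c x - hext c y\<bar>)"

lemma hext_dist_ge:
  assumes "x \<in> M" "y \<in> M" "c \<in> Y"
  shows "\<bar>hext c x - hext c y\<bar> \<le> hext_dist x y"
proof -
  have "\<bar>hext c' x - hext c' y\<bar> \<le> 2" for c'
    using hext_nonneg [OF assms(1), of c'] hext_nonneg [OF assms(2), of c']
      hext_le_2 [OF assms(1), of c'] hext_le_2 [OF assms(2), of c']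
    by (intro abs_leI) linarith+
  then show ?thesis
    unfolding hext_dist_def using assms(3) by (intro cSUP_upper bdd_aboveI2) auto
qed

lemma hext_dist_least: "(\<And>c. c \<in> Y \<Longrightarrow> \<bar>hext c x - hext c y\<bar> \<le> t) \<Longrightarrow> hext_dist x y \<le> t"
  unfolding hext_dist_def using nonempty by (rule cSUP_least)

lemma hext_dist_nonneg: "x \<in> M \<Longrightarrow> y \<in> M \<Longrightarrow> 0 \<le> hext_dist x y"
  using nonempty hext_dist_ge by (meson abs_ge_zero ex_in_conv order_trans)

lemma hext_dist_self: "hext_dist x x = 0"
  using nonempty by (simp add: hext_dist_def)

lemma hext_dist_commute: "hext_dist x y = hext_dist y x"
  unfolding hext_dist_def by (simp add: abs_minus_commute)

lemma hext_dist_triangle: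
  assumes "x \<in> M" "y \<in> M" "z \<in> M"
  shows "hext_dist x z \<le> hext_dist x y + hext_dist y z"
proof (rule hext_dist_least)
  fix c assume "c \<in> Y"
  then show "\<bar>hext c x - hext c z\<bar> \<le> hext_dist x y + hext_dist y z"
    using hext_dist_ge [OF assms(1,2)] hext_dist_ge [OF assms(2,3)] by fastforce
qed

lemma hext_dist_on_Y:
  assumes "x \<in> Y" "y \<in> Y"
  shows "hext_dist x y = e x y"
proof (rule antisym)
  show "hext_dist x y \<le> e x y"
  proof (rule hext_dist_least)
    fix c assume "c \<in> Y"
    then show "\<bar>hext c x - hext c y\<bar> \<le> e x y"
      using E.triangle [of x y c] E.triangle [of y x c] E.commute [of x y] assms
      by (simp add: hext_on_Y abs_le_iff)
  qed
  show "e x y \<le> hext_dist x y"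
    using hext_dist_ge [of x y y] assms Y_subset by (auto simp: hext_on_Y)
qed

text \<open>The second summand separates the points outside Y, which the functions hext c need not do.\<close>
definition ext_dist :: "'a \<Rightarrow> 'a \<Rightarrow> real" where
  "ext_dist x y =
    (if x \<in> M \<and> y \<in> M then hext_dist x y + min (d x y) (dist_to_Y x + dist_to_Y y) else 0)"

lemma ext_dist_on_Y: "x \<in> Y \<Longrightarrow> y \<in> Y \<Longrightarrow> ext_dist x y = e x y"
  using Y_subset by (auto simp: ext_dist_def hext_dist_on_Y dist_to_Y_eq_0)

lemma Metric_space_ext_dist: "Metric_space M ext_dist"
proof
  fix x y
  show "0 \<le> ext_dist x y"
    by (simp add: ext_dist_def hext_dist_nonneg)
  show "ext_dist x y = ext_dist y x"
    by (simp add: ext_dist_def hext_dist_commute commute add.commute)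
next
  fix x y assume xy: "x \<in> M" "y \<in> M"
  show "ext_dist x y = 0 \<longleftrightarrow> x = y"
  proof
    assume "ext_dist x y = 0"
    then have "hext_dist x y + min (d x y) (dist_to_Y x + dist_to_Y y) = 0"
      using xy by (simp add: ext_dist_def)
    moreover have "0 \<le> min (d x y) (dist_to_Y x + dist_to_Y y)"
      by simp
    ultimately have hd: "hext_dist x y = 0" and m: "min (d x y) (dist_to_Y x + dist_to_Y y) = 0"
      using hext_dist_nonneg [OF xy] by linarith+
    show "x = y"
    proof (cases "x \<in> Y \<and> y \<in> Y")
      case True
      then show ?thesis
        using hd hext_dist_on_Y by simp
    next
      case False
      then have "0 < dist_to_Y x + dist_to_Y y"
        using dist_to_Y_pos xy by (meson add_nonneg_pos add_pos_nonneg dist_to_Y_nonneg)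
      then show ?thesis
        using m xy by (simp add: min_def split: if_splits)
    qed
  qed (simp add: ext_dist_def hext_dist_self)
next
  fix x y z assume xyz: "x \<in> M" "y \<in> M" "z \<in> M"
  have "min (d x z) (dist_to_Y x + dist_to_Y z)
      \<le> min (d x y) (dist_to_Y x + dist_to_Y y) + min (d y z) (dist_to_Y y + dist_to_Y z)"
    using triangle [OF xyz] dist_to_Y_lipschitz [OF xyz(1,2)] dist_to_Y_lipschitz [OF xyz(3,2)]
      commute [of z y] dist_to_Y_nonneg [of y]
    by (simp add: min_def del: dist_to_Y_nonneg)
  then show "ext_dist x z \<le> ext_dist x y + ext_dist y z"
    using hext_dist_triangle [OF xyz] xyz by (simp add: ext_dist_def)
qed

lemma close_point_in_Y:
  assumes "a \<in> Y" "x \<in> M" "hext a x < t" "t \<le> 1"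
  shows "\<exists>b\<in>Y. e a b < t \<and> d x b \<le> 2 * dist_to_Y x"
proof (cases "x \<in> Y")
  case True
  then show ?thesis
    using assms E.commute [of a x] by (intro bexI [of _ x]) (auto simp: hext_on_Y)
next
  case False
  let ?Dx = "dist_to_Y x"
  have "\<exists>b\<in>Y. e b a + d x b / ?Dx - 1 < t"
  proof (rule ccontr)
    assume "\<not> ?thesis"
    then have "t \<le> hext a x"
      by (intro hext_greatest [OF assms(2) False]) (auto simp: not_less)
    with assms(3) show False
      by simp
  qed
  then obtain b where b: "b \<in> Y" "e b a + d x b / ?Dx - 1 < t"
    by blast
  have "1 \<le> d x b / ?Dx"
    using one_le_ratio [OF assms(2) False b(1)] .
  moreover have "0 < ?Dx"
    using dist_to_Y_pos assms(2) False by blast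
  ultimately have "e a b < t" "d x b / ?Dx \<le> 2"
    using b(2) E.nonneg [of b a] E.commute [of a b] assms(4) by linarith+
  then show ?thesis
    using b(1) \<open>0 < ?Dx\<close> by (auto simp: divide_le_eq)
qed

lemma d_small_if_ext_dist_small:
  assumes "a \<in> M" "\<epsilon> > 0"
  shows "\<exists>\<delta>>0. \<forall>x\<in>M. ext_dist a x < \<delta> \<longrightarrow> d a x < \<epsilon>"
proof (cases "a \<in> Y")
  case False
  have pos: "0 < dist_to_Y a"
    using dist_to_Y_pos assms(1) False by blast
  show ?thesis
  proof (intro exI [of _ "min \<epsilon> (dist_to_Y a)"] conjI ballI impI)
    show "0 < min \<epsilon> (dist_to_Y a)"
      using pos assms(2) by simp
    fix x assume x: "x \<in> M" "ext_dist a x < min \<epsilon> (dist_to_Y a)"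
    then have "min (d a x) (dist_to_Y a + dist_to_Y x) < min \<epsilon> (dist_to_Y a)"
      using hext_dist_nonneg [OF assms(1) x(1)] assms(1) by (simp add: ext_dist_def)
    then show "d a x < \<epsilon>"
      using dist_to_Y_nonneg [of x] by (auto simp: min_def simp del: dist_to_Y_nonneg split: if_splits)
  qed
next
  case True
  obtain s where s: "s > 0" "\<forall>b\<in>Y. e a b < s \<longrightarrow> d a b < \<epsilon> / 2"
    using d_small_if_e_small [OF True, of "\<epsilon> / 2"] assms(2) by auto
  define \<delta> where "\<delta> = min s (min (\<epsilon> / 4) 1)"
  show ?thesis
  proof (intro exI [of _ \<delta>] conjI ballI impI)
    show "0 < \<delta>"
      using s assms(2) by (simp add: \<delta>_def)
    fix x assume x: "x \<in> M" "ext_dist a x < \<delta>"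
    have "dist_to_Y x \<le> d a x"
      using dist_to_Y_le [OF True, of x] commute [of a x] by simp
    then have "ext_dist a x = hext_dist a x + dist_to_Y x"
      using assms(1) x(1) by (simp add: ext_dist_def dist_to_Y_eq_0 True)
    then have hd: "hext_dist a x < \<delta>" and Dx: "dist_to_Y x < \<delta>"
      using x hext_dist_nonneg [OF assms(1) x(1)] dist_to_Y_nonneg [of x] by linarith+
    have "hext a x \<le> hext_dist a x"
      using hext_dist_ge [OF assms(1) x(1) True] True by (simp add: hext_on_Y)
    then have "hext a x < \<delta>"
      using hd by linarith
    moreover have "\<delta> \<le> 1"
      by (simp add: \<delta>_def)
    ultimately obtain b where b: "b \<in> Y" "e a b < \<delta>" "d x b \<le> 2 * dist_to_Y x"
      using close_point_in_Y [OF True x(1)] by blast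
    then have "d a b < \<epsilon> / 2"
      using s by (simp add: \<delta>_def)
    moreover have "d a x \<le> d a b + d x b"
      using triangle [OF assms(1) _ x(1), of b] commute [of b x] b(1) Y_subset by auto
    ultimately show "d a x < \<epsilon>"
      using b(3) Dx by (simp add: \<delta>_def)
  qed
qed

lemma ext_dist_small_if_d_small:
  assumes "a \<in> M" "\<epsilon> > 0"
  shows "\<exists>\<delta>>0. \<forall>x\<in>M. d a x < \<delta> \<longrightarrow> ext_dist a x < \<epsilon>"
proof -
  obtain \<delta> where \<delta>: "\<delta> > 0" "\<forall>x\<in>M. d a x < \<delta> \<longrightarrow> (\<forall>c\<in>Y. \<bar>hext c a - hext c x\<bar> \<le> \<epsilon> / 2)"
    using hext_equicontinuous [OF assms(1)] assms(2) by (meson half_gt_zero)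
  show ?thesis
  proof (intro exI [of _ "min \<delta> (\<epsilon> / 2)"] conjI ballI impI)
    show "0 < min \<delta> (\<epsilon> / 2)"
      using \<delta>(1) assms(2) by simp
    fix x assume x: "x \<in> M" "d a x < min \<delta> (\<epsilon> / 2)"
    then have "hext_dist a x \<le> \<epsilon> / 2"
      using \<delta>(2) by (intro hext_dist_least) auto
    moreover have "ext_dist a x \<le> hext_dist a x + d a x"
      using x(1) assms(1) by (simp add: ext_dist_def)
    ultimately show "ext_dist a x < \<epsilon>"
      using x(2) by linarith
  qed
qed

lemma mtopology_ext_dist: "Metric_space.mtopology M ext_dist = mtopology"
  using mtopology_eq_iff [OF Metric_space_ext_dist Metric_space_axioms]
    d_small_if_ext_dist_small ext_dist_small_if_d_small by blast

end

lemma bounded_metric_extension: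
  assumes "Metric_space M d" "closedin (Metric_space.mtopology M d) Y" "Metric_space Y e"
    and "Metric_space.mtopology Y e = subtopology (Metric_space.mtopology M d) Y"
    and "\<And>x y. e x y \<le> 1"
  shows "\<exists>\<rho>. Metric_space M \<rho> \<and> Metric_space.mtopology M \<rho> = Metric_space.mtopology M d \<and>
    (\<forall>x\<in>Y. \<forall>y\<in>Y. \<rho> x y = e x y)"
proof (cases "Y = {}")
  case True
  then show ?thesis
    using assms(1) by blast
next
  case False
  interpret Metric_space M d
    by fact
  interpret D1: Metric_space M "capped_dist 1"
    by (rule capped_dist)
  have top: "D1.mtopology = mtopology"
    by (rule mtopology_capped_metric)
  interpret Hausdorff_metric_extension M Y "capped_dist 1" e
  proof (intro Hausdorff_metric_extension.intro Hausdorff_metric_extension_axioms.intro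
      D1.Metric_space_axioms assms(3) False)
    show "closedin D1.mtopology Y" "Metric_space.mtopology Y e = subtopology D1.mtopology Y"
      using assms(2,4) top by simp_all
    show "capped_dist 1 x y \<le> 1" for x y
      by (simp add: capped_dist_def)
  qed (rule assms(5))
  show ?thesis
    using Metric_space_ext_dist mtopology_ext_dist top ext_dist_on_Y by metis
qed

lemma compatible_metric_extension:
  assumes "metrizable_space X" "closedin X Y" "compatible_metric (subtopology X Y) e"
  shows "\<exists>\<rho>. compatible_metric X \<rho> \<and> (\<forall>x\<in>Y. \<forall>y\<in>Y. \<rho> x y \<le> e x y)"
proof -
  obtain M d where d: "Metric_space M d" and X: "X = Metric_space.mtopology M d"
    using assms(1) unfolding metrizable_space_def by blast
  interpret Metric_space M d
    by (rule d)
  have "Y \<subseteq> M"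
    using assms(2) X closedin_subset by force
  then have e: "Metric_space Y e" "Metric_space.mtopology Y e = subtopology X Y"
    using assms(3) X by (auto simp: compatible_metric_def Int_absorb1)
  interpret E: Metric_space Y e
    by (rule e(1))
  have "closedin mtopology Y"
    using assms(2) X by simp
  moreover have "Metric_space.mtopology Y (E.capped_dist 1) = subtopology mtopology Y"
    using E.mtopology_capped_metric e(2) X by simp
  moreover have "E.capped_dist 1 x y \<le> 1" for x y
    by (simp add: E.capped_dist_def)
  ultimately obtain \<rho> where "Metric_space M \<rho>" "Metric_space.mtopology M \<rho> = mtopology"
    and "\<forall>x\<in>Y. \<forall>y\<in>Y. \<rho> x y = E.capped_dist 1 x y"
    using bounded_metric_extension [OF d _ E.capped_dist] by blast
  moreover have "E.capped_dist 1 x y \<le> e x y" for x y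
    by (simp add: E.capped_dist_def)
  ultimately show ?thesis
    unfolding compatible_metric_def using X by auto
qed

lemma expansive_wrt_restrict:
  assumes "expansive_wrt G \<phi> S \<rho>" "Y \<subseteq> S" "\<forall>g\<in>carrier G. \<forall>y\<in>Y. \<phi> g y \<in> Y"
    and "\<forall>x\<in>Y. \<forall>y\<in>Y. \<rho> x y \<le> e x y"
  shows "expansive_wrt G (\<lambda>g. restrict (\<phi> g) Y) Y e"
proof -
  obtain c where "c > 0" and sep: "\<forall>x\<in>S. \<forall>y\<in>S. x \<noteq> y \<longrightarrow> (\<exists>g\<in>carrier G. c < \<rho> (\<phi> g x) (\<phi> g y))"
    using assms(1) unfolding expansive_wrt_def by blast
  show ?thesis
    unfolding expansive_wrt_def
  proof (intro exI [of _ c] conjI ballI impI)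
    fix x y assume xy: "x \<in> Y" "y \<in> Y" "x \<noteq> y"
    then obtain g where g: "g \<in> carrier G" "c < \<rho> (\<phi> g x) (\<phi> g y)"
      using sep assms(2) by blast
    then have "c < e (\<phi> g x) (\<phi> g y)"
      using assms(3,4) xy by (meson less_le_trans)
    then show "\<exists>g\<in>carrier G. c < e (restrict (\<phi> g) Y x) (restrict (\<phi> g) Y y)"
      using g(1) xy by auto
  qed (rule \<open>c > 0\<close>)
qed

theorem mainTheorem1:
  fixes X :: "'a topology" and G :: "('g, 'm) monoid_scheme" and \<phi> :: "'g \<Rightarrow> 'a \<Rightarrow> 'a"
    and Y :: "'a set"
  assumes "metrizable_space X"
    and "group G"
    and "group_action G (topspace X) \<phi>"
    and "MIE G \<phi> X"
    and "closedin X Y"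
    and "\<forall>g\<in>carrier G. \<forall>y\<in>Y. \<phi> g y \<in> Y"
  shows "group_action G Y (\<lambda>g. restrict (\<phi> g) Y) \<and> MIE G (\<lambda>g. restrict (\<phi> g) Y) (subtopology X Y)"
proof
  have Y: "Y \<subseteq> topspace X"
    using assms(5) closedin_subset by blast
  show "group_action G Y (\<lambda>g. restrict (\<phi> g) Y)"
    using group_action.restrict_to_invariant_subset [OF assms(3) Y assms(6)] .
  show "MIE G (\<lambda>g. restrict (\<phi> g) Y) (subtopology X Y)"
    unfolding MIE_def
  proof (intro allI impI)
    fix e assume "compatible_metric (subtopology X Y) e"
    then obtain \<rho> where "compatible_metric X \<rho>" and \<rho>_le_e: "\<forall>x\<in>Y. \<forall>y\<in>Y. \<rho> x y \<le> e x y"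
      using compatible_metric_extension assms(1,5) by blast
    then have "expansive_wrt G \<phi> (topspace X) \<rho>"
      using assms(4) unfolding MIE_def by blast
    then show "expansive_wrt G (\<lambda>g. restrict (\<phi> g) Y) (topspace (subtopology X Y)) e"
      using expansive_wrt_restrict [OF _ Y assms(6) \<rho>_le_e] Y by (simp add: Int_absorb1)
  qed
qed

end
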